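(* Assume Assumption A holds, and let $\mu\in\mathcal{M}$. Then there exists an $S$-valued process $(\mathbf{t}_n)_{n\ge1}$, possibly defined on an enlargement of the probability space carrying the state process $(\mathbf{s}_n)_{n\ge1}$, such that: (P1) for every $n$, conditional on $\mathbf{s}_n$, the vector $(\mathbf{t}_1,\dots,\mathbf{t}_n)$ is independent of $(\mathbf{s}_{n+1},\mathbf{s}_{n+2},\dots)$; (P2) the law of the sequence $(\mathbf{t}_n)_n$ equals the law of the sequence $(\mathbf{s}_n)_n$; (P3) for each $n$, the law of the pair $(\mathbf{s}_n,\mathbf{t}_n)$ is $\mu$; (P4) for each $n$, the conditional law of $\mathbf{s}_n$ given $(\mathbf{t}_1,\dots,\mathbf{t}_n)$ is $\mu(\cdot\mid\mathbf{t}_n)$.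
   Context: $S$ is a finite set; $(\mathbf{s}_n)_{n\ge1}$ is an irreducible aperiodic Markov chain on $S$ with transition function $p(\cdot\mid\cdot)$, invariant measure $m$ (with full support), and $\mathbf{s}_1\sim m$. Assumption A: there exist nonnegative numbers $\alpha_s$, $s\in S$, with $\sum_{s\in S\setminus\{\bar s\}}\alpha_s\le1$ for every $\bar s\in S$, such that $p(s'\mid s)=\alpha_{s'}$ whenever $s'\neq s$. $\mathcal{M}$ is the set of probability distributions $\mu$ on $S\times S$ both of whose marginals equal $m$; $\mu(s\mid t)=\mu(s,t)/m(t)$. *)

theory Defs
  imports "HOL-Probability.Probability"
begin

text \<open>Transition functions are written p s' s = p(s' | s). Time is indexed from 0
  (index 0 corresponds to the paper's time 1).\<close>

definition stochastic :: "('a::finite \<Rightarrow> 'a \<Rightarrow> real) \<Rightarrow> bool" where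
  "stochastic p \<longleftrightarrow> (\<forall>s s'. 0 \<le> p s' s) \<and> (\<forall>s. (\<Sum>s'\<in>UNIV. p s' s) = 1)"

fun nstep :: "('a::finite \<Rightarrow> 'a \<Rightarrow> real) \<Rightarrow> nat \<Rightarrow> 'a \<Rightarrow> 'a \<Rightarrow> real" where
  "nstep p 0 s' s = (if s' = s then 1 else 0)"
| "nstep p (Suc n) s' s = (\<Sum>u\<in>UNIV. p s' u * nstep p n u s)"

definition irreducible_chain :: "('a::finite \<Rightarrow> 'a \<Rightarrow> real) \<Rightarrow> bool" where
  "irreducible_chain p \<longleftrightarrow> (\<forall>s s'. \<exists>n>0. nstep p n s' s > 0)"

definition aperiodic_chain :: "('a::finite \<Rightarrow> 'a \<Rightarrow> real) \<Rightarrow> bool" where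
  "aperiodic_chain p \<longleftrightarrow> (\<forall>s. Gcd {n. n > 0 \<and> nstep p n s s > 0} = (1::nat))"

definition invariant_measure :: "('a::finite \<Rightarrow> real) \<Rightarrow> ('a \<Rightarrow> 'a \<Rightarrow> real) \<Rightarrow> bool" where
  "invariant_measure m p \<longleftrightarrow> (\<forall>s. 0 \<le> m s) \<and> (\<Sum>s\<in>UNIV. m s) = 1 \<and>
     (\<forall>s'. (\<Sum>s\<in>UNIV. m s * p s' s) = m s')"

definition assumption_A :: "('a::finite \<Rightarrow> 'a \<Rightarrow> real) \<Rightarrow> bool" where
  "assumption_A p \<longleftrightarrow> (\<exists>\<alpha>::'a \<Rightarrow> real. (\<forall>s. 0 \<le> \<alpha> s) \<and>
     (\<forall>sb. (\<Sum>s\<in>UNIV - {sb}. \<alpha> s) \<le> 1) \<and> (\<forall>s s'. s' \<noteq> s \<longrightarrow> p s' s = \<alpha> s'))"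

definition couplings :: "('a::finite \<Rightarrow> real) \<Rightarrow> ('a \<times> 'a \<Rightarrow> real) set" where
  "couplings m = {\<mu>. (\<forall>x. 0 \<le> \<mu> x) \<and> (\<Sum>x\<in>UNIV. \<mu> x) = 1 \<and>
     (\<forall>a. (\<Sum>b\<in>UNIV. \<mu> (a, b)) = m a) \<and> (\<forall>b. (\<Sum>a\<in>UNIV. \<mu> (a, b)) = m b)}"

definition cond_coupling :: "('a \<times> 'a \<Rightarrow> real) \<Rightarrow> ('a \<Rightarrow> real) \<Rightarrow> 'a \<Rightarrow> 'a \<Rightarrow> real" where
  "cond_coupling \<mu> m a b = \<mu> (a, b) / m b"

definition markov_law :: "'w measure \<Rightarrow> (nat \<Rightarrow> 'w \<Rightarrow> 'a::finite) \<Rightarrow> ('a \<Rightarrow> real) \<Rightarrow> ('a \<Rightarrow> 'a \<Rightarrow> real) \<Rightarrow> bool" where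
  "markov_law M X m p \<longleftrightarrow> (\<forall>n x. measure M {w \<in> space M. \<forall>i\<le>n. X i w = x i}
      = m (x 0) * (\<Prod>i<n. p (x (Suc i)) (x i)))"

end

theory Submission
  imports Defs
begin

text \<open>Under Assumption A the kernel is \<open>p = \<beta> m + (1 - \<beta>) Id\<close>, so it commutes with the
  conditional coupling: summing \<open>\<mu>(s'|t') p(t'|t)\<close> over \<open>t'\<close> gives the same as summing
  \<open>p(s'|s) \<mu>(s|t)\<close> over \<open>s\<close>. The pair \<open>(s\<^sub>n, t\<^sub>n)\<close> is
  built as a Markov chain on \<open>S \<times> S\<close> started from \<open>\<mu>\<close>: the state moves by \<open>p\<close>, and the new
  signal is drawn by Bayes' rule from the prior \<open>p(\<cdot>|t)\<close> and the likelihood \<open>\<mu>(s'|\<cdot>)\<close>. By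
  the commutation identity the posterior of \<open>s\<^sub>n\<close> given the signals stays \<open>\<mu>(\<cdot>|t\<^sub>n)\<close> along the
  chain, which yields (P4), the law of the signals (P2) and stationarity of \<open>\<mu>\<close> (P3); (P1) holds
  because the states move by \<open>p\<close> whatever the signals are.\<close>

fun random_map_path :: "'b \<Rightarrow> (nat \<Rightarrow> 'b \<Rightarrow> 'b) \<Rightarrow> nat \<Rightarrow> 'b" where
  "random_map_path c \<omega> 0 = \<omega> 0 c"
| "random_map_path c \<omega> (Suc n) = \<omega> (Suc n) (random_map_path c \<omega> n)"

lemma random_map_path_eq_iff:
  "(\<forall>i\<le>n. random_map_path c \<omega> i = x i) \<longleftrightarrow>
   (\<forall>i\<in>{..n}. \<omega> i \<in> (if i = 0 then {g. g c = x 0} else {g. g (x (i - 1)) = x i}))"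
proof (induction n)
  case (Suc n)
  have "(\<forall>i\<le>Suc n. random_map_path c \<omega> i = x i) \<longleftrightarrow>
        (\<forall>i\<le>n. random_map_path c \<omega> i = x i) \<and> \<omega> (Suc n) (x n) = x (Suc n)"
    by (auto simp: le_Suc_eq) (metis order.refl)
  with Suc.IH show ?case
    by (simp add: atMost_Suc conj_commute)
qed simp

lemma measure_Pi_pmf_eval:
  fixes P :: "'b::finite \<Rightarrow> 'c pmf"
  shows "measure_pmf.prob (Pi_pmf UNIV d P) {g. g y = z} = pmf (P y) z"
proof -
  have "{g. g y = z} = Pi UNIV (\<lambda>u. if u = y then {z} else UNIV)"
    by (auto simp: Pi_def split: if_splits)
  then have "measure_pmf.prob (Pi_pmf UNIV d P) {g. g y = z} =
     (\<Prod>u\<in>UNIV. measure_pmf.prob (P u) (if u = y then {z} else UNIV))"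
    by (simp add: measure_Pi_pmf_Pi)
  also have "\<dots> = pmf (P y) z"
    by (simp add: measure_pmf_single if_distrib prod.delta cong: if_cong)
  finally show ?thesis .
qed

text \<open>A Markov chain is realised as \<open>X 0 = \<omega> 0 c\<close>, \<open>X (n+1) = \<omega> (n+1) (X n)\<close> for independent
  random maps \<open>\<omega> n\<close> with independent values, drawn from the initial law for \<open>n = 0\<close> and from
  the kernel otherwise.\<close>
definition random_maps :: "'b::finite \<Rightarrow> 'b pmf \<Rightarrow> ('b \<Rightarrow> 'b pmf) \<Rightarrow> nat \<Rightarrow> ('b \<Rightarrow> 'b) measure" where
  "random_maps c I K n = measure_pmf (Pi_pmf UNIV c (if n = 0 then \<lambda>_. I else K))"

lemma random_map_path_measurable:
  "(\<lambda>\<omega>. random_map_path c \<omega> n) \<in> measurable (PiM UNIV (random_maps c I K)) (count_space UNIV)"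
proof -
  have eval_measurable: "(\<lambda>\<omega>. \<omega> n y) \<in> measurable (PiM UNIV (random_maps c I K)) (count_space UNIV)" for n y
    by (rule measurable_compose[OF measurable_component_singleton]) (auto simp: random_maps_def)
  show ?thesis
  proof (induction n)
    case (Suc n)
    then show ?case
      using eval_measurable[of "Suc n"]
      by (simp add: measurable_compose_countable[where f="\<lambda>y \<omega>. \<omega> (Suc n) y"])
  qed (simp add: eval_measurable)
qed

lemma measure_random_map_path:
  "measure (PiM UNIV (random_maps c I K))
     {\<omega>\<in>space (PiM UNIV (random_maps c I K)). \<forall>i\<le>n. random_map_path c \<omega> i = x i}
   = pmf I (x 0) * (\<Prod>i<n. pmf (K (x i)) (x (Suc i)))"
proof -
  interpret product_prob_space "random_maps c I K" UNIV
    unfolding random_maps_def by unfold_locales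
  define B where "B i = (if i = 0 then {g. g c = x 0} else {g. g (x (i - 1)) = x i})" for i
  have "emeasure (PiM UNIV (random_maps c I K))
      {\<omega>\<in>space (PiM UNIV (random_maps c I K)). \<forall>i\<in>{..n}. \<omega> i \<in> B i}
      = (\<Prod>i\<in>{..n}. emeasure (random_maps c I K i) (B i))"
    by (rule emeasure_PiM_Collect) (auto simp: random_maps_def)
  then have "measure (PiM UNIV (random_maps c I K))
      {\<omega>\<in>space (PiM UNIV (random_maps c I K)). \<forall>i\<le>n. random_map_path c \<omega> i = x i}
      = (\<Prod>i\<in>{..n}. measure (random_maps c I K i) (B i))"
    unfolding measure_def random_map_path_eq_iff B_def[symmetric]
    by (simp add: M.emeasure_eq_measure prod_ennreal prod_nonneg)
  also have "\<dots> = measure (random_maps c I K 0) (B 0) * (\<Prod>i<n. measure (random_maps c I K (Suc i)) (B (Suc i)))"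
    by (simp only: lessThan_Suc_atMost[symmetric] prod.lessThan_Suc_shift)
  also have "\<dots> = pmf I (x 0) * (\<Prod>i<n. pmf (K (x i)) (x (Suc i)))"
    by (simp add: random_maps_def B_def measure_Pi_pmf_eval)
  finally show ?thesis .
qed

lemma markov_chain_measure_exists:
  fixes \<iota> :: "'b::finite \<Rightarrow> real" and K :: "'b \<Rightarrow> 'b \<Rightarrow> real"
  assumes \<iota>_nonneg: "\<forall>z. 0 \<le> \<iota> z" and \<iota>_sum: "sum \<iota> UNIV = 1" and K: "stochastic K"
  shows "\<exists>M::(nat \<Rightarrow> 'b) measure. prob_space M \<and>
     sets M = sets (PiM UNIV (\<lambda>_. count_space UNIV)) \<and> markov_law M (\<lambda>i w. w i) \<iota> K"
proof -
  define I where "I = embed_pmf \<iota>"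
  define Kp where "Kp y = embed_pmf (\<lambda>z. K z y)" for y
  have pmf_I: "pmf I z = \<iota> z" for z
    unfolding I_def using \<iota>_nonneg \<iota>_sum
    by (subst pmf_embed_pmf) (auto simp: nn_integral_count_space_finite sum_nonneg)
  have pmf_Kp: "pmf (Kp y) z = K z y" for y z
    unfolding Kp_def using K
    by (subst pmf_embed_pmf) (auto simp: stochastic_def nn_integral_count_space_finite sum_nonneg)
  obtain c :: 'b where True by blast
  define \<Omega> where "\<Omega> = PiM UNIV (random_maps c I Kp)"
  define PS where "PS = PiM UNIV (\<lambda>_::nat. count_space (UNIV::'b set))"
  interpret \<Omega>: product_prob_space "random_maps c I Kp" UNIV
    unfolding random_maps_def by unfold_locales
  have paths_measurable: "random_map_path c \<in> measurable \<Omega> PS"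
    unfolding PS_def \<Omega>_def by (rule measurable_PiM_single') (use random_map_path_measurable in auto)
  define M where "M = distr \<Omega> PS (random_map_path c)"
  have "prob_space M"
    unfolding M_def \<Omega>_def using paths_measurable[unfolded \<Omega>_def] by (rule \<Omega>.prob_space_distr)
  moreover have sets_M: "sets M = sets PS"
    unfolding M_def by simp
  moreover have "measure M {w\<in>space M. \<forall>i\<le>n. w i = x i} = \<iota> (x 0) * (\<Prod>i<n. K (x (Suc i)) (x i))"
    for n x
  proof -
    have "{w\<in>space M. \<forall>i\<le>n. w i = x i} = {w\<in>space PS. \<forall>i\<in>{..n}. w i \<in> {x i}}"
      using sets_eq_imp_space_eq[OF sets_M] by auto
    moreover have "\<dots> \<in> sets PS"
      unfolding PS_def by (rule sets.sets_Collect_finite_All) auto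
    ultimately have "measure M {w\<in>space M. \<forall>i\<le>n. w i = x i}
        = measure \<Omega> {\<omega>\<in>space \<Omega>. \<forall>i\<le>n. random_map_path c \<omega> i = x i}"
      unfolding M_def using paths_measurable measurable_space[OF paths_measurable]
      by (subst measure_distr) (auto intro!: arg_cong[where f="measure _"])
    then show ?thesis
      unfolding \<Omega>_def by (simp add: measure_random_map_path pmf_I pmf_Kp)
  qed
  ultimately show ?thesis
    unfolding markov_law_def PS_def by blast
qed

fun path_weight :: "('b::finite \<Rightarrow> real) \<Rightarrow> ('b \<Rightarrow> 'b \<Rightarrow> real) \<Rightarrow> (nat \<Rightarrow> 'b set) \<Rightarrow> nat \<Rightarrow> 'b \<Rightarrow> real" where
  "path_weight \<iota> K A 0 z = (if z \<in> A 0 then \<iota> z else 0)"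
| "path_weight \<iota> K A (Suc n) z =
     (if z \<in> A (Suc n) then (\<Sum>y\<in>UNIV. path_weight \<iota> K A n y * K z y) else 0)"

lemma path_weight_outside: "z \<notin> A n \<Longrightarrow> path_weight \<iota> K A n z = 0"
  by (cases n) auto

locale markov_path_space = prob_space M for M :: "(nat \<Rightarrow> 'b::finite) measure" +
  fixes \<iota> :: "'b \<Rightarrow> real" and K :: "'b \<Rightarrow> 'b \<Rightarrow> real"
  assumes sets_M: "sets M = sets (PiM UNIV (\<lambda>_. count_space UNIV))"
    and markov: "markov_law M (\<lambda>i w. w i) \<iota> K"
begin

lemma coordinate_measurable [measurable]: "(\<lambda>w. w i) \<in> measurable M (count_space UNIV)"
  using measurable_component_singleton[of i UNIV "\<lambda>_. count_space UNIV"]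
  by (simp add: measurable_cong_sets[OF sets_M refl])

lemma measure_split_coordinate:
  assumes "S \<in> sets M"
  shows "measure M S = (\<Sum>y\<in>UNIV. measure M {w\<in>S. w n = y})"
proof -
  have "measure M S = measure M (\<Union>y\<in>UNIV. {w\<in>S. w n = y})"
    by (intro arg_cong[where f="measure M"]) blast
  also have "\<dots> = (\<Sum>y\<in>UNIV. measure M {w\<in>S. w n = y})"
  proof (rule finite_measure_finite_Union)
    have "{w\<in>S. w n = y} = S \<inter> {w\<in>space M. w n = y}" for y
      using sets.sets_into_space[OF assms] by auto
    then show "(\<lambda>y. {w\<in>S. w n = y}) ` UNIV \<subseteq> sets M"
      using assms by auto
  qed (auto simp: disjoint_family_on_def)
  finally show ?thesis .
qed

lemma measure_path_constrained:
  "measure M {w\<in>space M. (\<forall>i\<le>n. w i \<in> A i) \<and> (\<forall>i\<in>{n..n+k}. w i = x i)}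
   = path_weight \<iota> K A n (x n) * (\<Prod>i\<in>{n..<n+k}. K (x (Suc i)) (x i))"
proof (induction n arbitrary: k x)
  case 0
  have "{w\<in>space M. (\<forall>i\<le>0. w i \<in> A i) \<and> (\<forall>i\<in>{0..0+k}. w i = x i)} =
     (if x 0 \<in> A 0 then {w\<in>space M. \<forall>i\<le>k. w i = x i} else {})"
    by (auto; force)
  then show ?case
    using markov by (simp add: markov_law_def atLeast0LessThan)
next
  case (Suc n)
  define S where "S = {w\<in>space M. (\<forall>i\<le>Suc n. w i \<in> A i) \<and> (\<forall>i\<in>{Suc n..Suc n+k}. w i = x i)}"
  have "S \<in> sets M"
    unfolding S_def by measurable
  then have "measure M S = (\<Sum>y\<in>UNIV. measure M {w\<in>S. w n = y})"
    by (rule measure_split_coordinate)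
  also have "\<dots> = (\<Sum>y\<in>UNIV. if x (Suc n) \<in> A (Suc n) then measure M
      {w\<in>space M. (\<forall>i\<le>n. w i \<in> A i) \<and> (\<forall>i\<in>{n..n+Suc k}. w i = (x(n := y)) i)} else 0)"
  proof (intro sum.cong refl)
    fix y
    have "{w\<in>S. w n = y} = (if x (Suc n) \<in> A (Suc n) then
        {w\<in>space M. (\<forall>i\<le>n. w i \<in> A i) \<and> (\<forall>i\<in>{n..n+Suc k}. w i = (x(n := y)) i)} else {})"
      unfolding S_def by (auto simp: le_Suc_eq; force)
    then show "measure M {w\<in>S. w n = y} = (if x (Suc n) \<in> A (Suc n) then measure M
        {w\<in>space M. (\<forall>i\<le>n. w i \<in> A i) \<and> (\<forall>i\<in>{n..n+Suc k}. w i = (x(n := y)) i)} else 0)"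
      by simp
  qed
  also have "\<dots> = (\<Sum>y\<in>UNIV. if x (Suc n) \<in> A (Suc n) then
      path_weight \<iota> K A n y * K (x (Suc n)) y * (\<Prod>i\<in>{Suc n..<Suc n+k}. K (x (Suc i)) (x i)) else 0)"
  proof (intro sum.cong refl if_cong)
    fix y
    have "(\<Prod>i\<in>{n..<n+Suc k}. K ((x(n := y)) (Suc i)) ((x(n := y)) i))
        = K (x (Suc n)) y * (\<Prod>i\<in>{Suc n..<Suc n+k}. K (x (Suc i)) (x i))"
      by (subst prod.atLeast_Suc_lessThan) (auto intro!: prod.cong)
    then show "measure M {w\<in>space M. (\<forall>i\<le>n. w i \<in> A i) \<and> (\<forall>i\<in>{n..n+Suc k}. w i = (x(n := y)) i)}
        = path_weight \<iota> K A n y * K (x (Suc n)) y * (\<Prod>i\<in>{Suc n..<Suc n+k}. K (x (Suc i)) (x i))"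
      using Suc.IH[of "Suc k" "x(n := y)"] by simp
  qed
  also have "\<dots> = path_weight \<iota> K A (Suc n) (x (Suc n)) * (\<Prod>i\<in>{Suc n..<Suc n+k}. K (x (Suc i)) (x i))"
    by (simp add: sum_distrib_right)
  finally show ?case
    unfolding S_def .
qed

lemma measure_path_constrained_end:
  "measure M {w\<in>space M. (\<forall>i\<le>n. w i \<in> A i) \<and> w n = z} = path_weight \<iota> K A n z"
  using measure_path_constrained[of n A 0 "\<lambda>_. z"] by simp

lemma measure_cylinder:
  "measure M {w\<in>space M. \<forall>i\<le>n. w i \<in> A i} = (\<Sum>z\<in>UNIV. path_weight \<iota> K A n z)"
proof -
  have "{w\<in>space M. \<forall>i\<le>n. w i \<in> A i} \<in> sets M"
    by measurable
  then show ?thesis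
    by (subst measure_split_coordinate[where n=n]) (simp_all add: measure_path_constrained_end[symmetric])
qed

end

lemma sum_UNIV_prod: "(\<Sum>z\<in>(UNIV::('a::finite \<times> 'b::finite) set). f z) = (\<Sum>a\<in>UNIV. \<Sum>b\<in>UNIV. f (a, b))"
  by (simp add: sum.cartesian_product UNIV_Times_UNIV[symmetric] del: UNIV_Times_UNIV)

definition path_prob :: "('a \<Rightarrow> real) \<Rightarrow> ('a \<Rightarrow> 'a \<Rightarrow> real) \<Rightarrow> nat \<Rightarrow> (nat \<Rightarrow> 'a) \<Rightarrow> real" where
  "path_prob \<iota> K n x = \<iota> (x 0) * (\<Prod>i<n. K (x (Suc i)) (x i))"

lemma path_prob_Suc: "path_prob \<iota> K (Suc n) x = path_prob \<iota> K n x * K (x (Suc n)) (x n)"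
  by (simp add: path_prob_def mult.assoc)

locale signal_coupling =
  fixes p :: "'a::finite \<Rightarrow> 'a \<Rightarrow> real" and m :: "'a \<Rightarrow> real" and \<mu> :: "'a \<times> 'a \<Rightarrow> real"
  assumes stochastic_p: "stochastic p" and invariant_m: "invariant_measure m p"
    and m_pos: "\<forall>s. m s > 0" and assumption_A_p: "assumption_A p" and coupling: "\<mu> \<in> couplings m"
begin

lemma p_nonneg: "0 \<le> p s' s"
  using stochastic_p by (simp add: stochastic_def)

lemma p_sum: "(\<Sum>s'\<in>UNIV. p s' s) = 1"
  using stochastic_p by (simp add: stochastic_def)

lemma m_sum: "(\<Sum>s\<in>UNIV. m s) = 1"
  and m_invariant: "(\<Sum>s\<in>UNIV. m s * p s' s) = m s'"
  using invariant_m by (simp_all add: invariant_measure_def)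

lemma \<mu>_nonneg: "0 \<le> \<mu> z"
  using coupling by (cases z) (simp add: couplings_def)

lemma \<mu>_sum: "sum \<mu> UNIV = 1"
  and \<mu>_fst_marginal: "(\<Sum>b\<in>UNIV. \<mu> (a, b)) = m a"
  and \<mu>_snd_marginal: "(\<Sum>a\<in>UNIV. \<mu> (a, b)) = m b"
  using coupling by (simp_all add: couplings_def)

lemma cond_coupling_nonneg: "0 \<le> cond_coupling \<mu> m a b"
  unfolding cond_coupling_def by (intro divide_nonneg_pos \<mu>_nonneg m_pos[rule_format])

lemma cond_coupling_mult: "cond_coupling \<mu> m a b * m b = \<mu> (a, b)"
  unfolding cond_coupling_def using m_pos[rule_format, of b] by simp

lemma cond_coupling_sum: "(\<Sum>a\<in>UNIV. cond_coupling \<mu> m a b) = 1"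
  unfolding cond_coupling_def using m_pos[rule_format, of b]
  by (simp add: \<mu>_snd_marginal sum_divide_distrib[symmetric])

lemma kernel_lazy_resampling: "\<exists>\<beta>. \<forall>u s. p u s = \<beta> * m u + (if u = s then 1 - \<beta> else 0)"
proof -
  obtain \<alpha> :: "'a \<Rightarrow> real" where \<alpha>: "\<forall>s s'. s' \<noteq> s \<longrightarrow> p s' s = \<alpha> s'"
    using assumption_A_p unfolding assumption_A_def by blast
  define \<beta> where "\<beta> = (\<Sum>s\<in>UNIV. \<alpha> s)"
  have p_eq: "p u s = \<alpha> u + (if u = s then 1 - \<beta> else 0)" for u s
  proof (cases "u = s")
    case True
    have "1 = p s s + (\<Sum>v\<in>UNIV-{s}. p v s)"
      using p_sum[of s] by (simp add: sum.remove)
    also have "(\<Sum>v\<in>UNIV-{s}. p v s) = \<beta> - \<alpha> s"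
      using \<alpha> unfolding \<beta>_def by (simp add: sum.remove[of UNIV s \<alpha>])
    finally show ?thesis using True by simp
  qed (use \<alpha> in auto)
  have "\<alpha> u = \<beta> * m u" for u
  proof -
    have "m u = (\<Sum>s\<in>UNIV. m s * \<alpha> u + (if u = s then m s * (1 - \<beta>) else 0))"
      using m_invariant[of u] by (simp add: p_eq distrib_left if_distrib cong: if_cong)
    also have "\<dots> = \<alpha> u + m u * (1 - \<beta>)"
      by (simp add: sum.distrib sum_distrib_right[symmetric] m_sum)
    finally show ?thesis by (simp add: algebra_simps)
  qed
  then show ?thesis
    using p_eq by auto
qed

definition next_state_given_signal :: "'a \<Rightarrow> 'a \<Rightarrow> real" where
  "next_state_given_signal s' t = (\<Sum>s\<in>UNIV. p s' s * cond_coupling \<mu> m s t)"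

lemma cond_coupling_kernel_commute:
  "(\<Sum>t'\<in>UNIV. cond_coupling \<mu> m s' t' * p t' t) = next_state_given_signal s' t"
proof -
  obtain \<beta> where p_eq: "\<And>u s. p u s = \<beta> * m u + (if u = s then 1 - \<beta> else 0)"
    using kernel_lazy_resampling by blast
  have "(\<Sum>t'\<in>UNIV. cond_coupling \<mu> m s' t' * p t' t)
      = (\<Sum>t'\<in>UNIV. \<beta> * (cond_coupling \<mu> m s' t' * m t') + (if t' = t then (1 - \<beta>) * cond_coupling \<mu> m s' t else 0))"
    by (intro sum.cong) (auto simp: p_eq algebra_simps)
  also have "\<dots> = \<beta> * m s' + (1 - \<beta>) * cond_coupling \<mu> m s' t"
    by (simp add: sum.distrib cond_coupling_mult sum_distrib_left[symmetric] \<mu>_fst_marginal)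
  also have "\<dots> = (\<Sum>s\<in>UNIV. \<beta> * m s' * cond_coupling \<mu> m s t + (if s' = s then (1 - \<beta>) * cond_coupling \<mu> m s t else 0))"
    by (simp add: sum.distrib sum_distrib_left[symmetric] cond_coupling_sum)
  also have "\<dots> = next_state_given_signal s' t"
    unfolding next_state_given_signal_def by (intro sum.cong) (auto simp: p_eq algebra_simps)
  finally show ?thesis .
qed

lemma next_state_given_signal_nonneg: "0 \<le> next_state_given_signal s' t"
  unfolding next_state_given_signal_def by (intro sum_nonneg mult_nonneg_nonneg p_nonneg cond_coupling_nonneg)

text \<open>Bayes' rule: the next signal \<open>t'\<close> given the next state \<open>s'\<close> and the current signal \<open>t\<close>,
  for the prior \<open>p(\<cdot> | t)\<close> and the likelihood \<open>\<mu>(s' | t')\<close>. The junk value \<open>p t' t\<close> on the null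
  event \<open>next_state_given_signal s' t = 0\<close> only keeps the kernel stochastic.\<close>
definition signal_kernel :: "'a \<Rightarrow> 'a \<Rightarrow> 'a \<Rightarrow> real" where
  "signal_kernel s' t t' =
     (if next_state_given_signal s' t = 0 then p t' t
      else p t' t * cond_coupling \<mu> m s' t' / next_state_given_signal s' t)"

lemma next_state_given_signal_mult_signal_kernel:
  "next_state_given_signal s' t * signal_kernel s' t t' = p t' t * cond_coupling \<mu> m s' t'"
proof (cases "next_state_given_signal s' t = 0")
  case True
  then have "(\<Sum>t'\<in>UNIV. cond_coupling \<mu> m s' t' * p t' t) = 0"
    by (simp add: cond_coupling_kernel_commute)
  then have "\<forall>t'\<in>UNIV. cond_coupling \<mu> m s' t' * p t' t = 0"
    by (subst (asm) sum_nonneg_eq_0_iff) (auto intro: mult_nonneg_nonneg p_nonneg cond_coupling_nonneg)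
  then show ?thesis
    using True by (simp add: mult.commute)
qed (simp add: signal_kernel_def)

lemma signal_kernel_nonneg: "0 \<le> signal_kernel s' t t'"
  unfolding signal_kernel_def using next_state_given_signal_nonneg p_nonneg cond_coupling_nonneg by simp

lemma signal_kernel_sum: "(\<Sum>t'\<in>UNIV. signal_kernel s' t t') = 1"
proof (cases "next_state_given_signal s' t = 0")
  case False
  then have "(\<Sum>t'\<in>UNIV. signal_kernel s' t t') = (\<Sum>t'\<in>UNIV. cond_coupling \<mu> m s' t' * p t' t) / next_state_given_signal s' t"
    unfolding signal_kernel_def by (simp add: sum_divide_distrib mult.commute)
  then show ?thesis
    using False by (simp add: cond_coupling_kernel_commute)
qed (simp add: signal_kernel_def p_sum)

text \<open>Like \<open>p\<close>, the kernel takes its target first.\<close>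
definition coupled_kernel :: "'a \<times> 'a \<Rightarrow> 'a \<times> 'a \<Rightarrow> real" where
  "coupled_kernel z y = p (fst z) (fst y) * signal_kernel (fst z) (snd y) (snd z)"

lemma coupled_kernel_state_marginal: "(\<Sum>t'\<in>UNIV. coupled_kernel (s', t') y) = p s' (fst y)"
  unfolding coupled_kernel_def by (simp add: sum_distrib_left[symmetric] signal_kernel_sum)

lemma stochastic_coupled_kernel: "stochastic coupled_kernel"
proof -
  have "(\<Sum>z\<in>UNIV. coupled_kernel z y) = 1" for y
    by (simp add: sum_UNIV_prod coupled_kernel_state_marginal p_sum)
  moreover have "0 \<le> coupled_kernel z y" for z y
    unfolding coupled_kernel_def by (intro mult_nonneg_nonneg p_nonneg signal_kernel_nonneg)
  ultimately show ?thesis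
    unfolding stochastic_def by blast
qed

lemma coupled_kernel_stationary: "(\<Sum>y\<in>UNIV. \<mu> y * coupled_kernel z y) = \<mu> z"
proof -
  obtain a b where z: "z = (a, b)" by fastforce
  have "(\<Sum>y\<in>UNIV. \<mu> y * coupled_kernel z y) = (\<Sum>s\<in>UNIV. \<Sum>t\<in>UNIV. \<mu> (s, t) * (p a s * signal_kernel a t b))"
    by (simp add: sum_UNIV_prod coupled_kernel_def z)
  also have "\<dots> = (\<Sum>t\<in>UNIV. \<Sum>s\<in>UNIV. \<mu> (s, t) * (p a s * signal_kernel a t b))"
    by (rule sum.swap)
  also have "\<dots> = (\<Sum>t\<in>UNIV. m t * (next_state_given_signal a t * signal_kernel a t b))"
    unfolding next_state_given_signal_def
    by (simp add: cond_coupling_mult[symmetric] sum_distrib_left sum_distrib_right mult_ac)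
  also have "\<dots> = (\<Sum>t\<in>UNIV. m t * p b t) * cond_coupling \<mu> m a b"
    by (simp add: next_state_given_signal_mult_signal_kernel sum_distrib_right mult.assoc)
  also have "\<dots> = \<mu> z"
    using cond_coupling_mult[of a b] by (simp add: m_invariant z mult.commute)
  finally show ?thesis .
qed


abbreviation weight :: "(nat \<Rightarrow> ('a \<times> 'a) set) \<Rightarrow> nat \<Rightarrow> 'a \<times> 'a \<Rightarrow> real" where
  "weight \<equiv> path_weight \<mu> coupled_kernel"

lemma weight_unconstrained: "weight (\<lambda>_. UNIV) n z = \<mu> z"
  by (induction n arbitrary: z) (simp_all add: coupled_kernel_stationary mult.commute)

lemma weight_signal_path:
  "weight (\<lambda>i. UNIV \<times> {x i}) n (a, b) = (if b = x n then cond_coupling \<mu> m a b * path_prob m p n x else 0)"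
proof (induction n arbitrary: a b)
  case 0
  then show ?case
    using cond_coupling_mult[of a "x 0"] by (simp add: path_prob_def mult.commute)
next
  case (Suc n)
  have "(\<Sum>y\<in>UNIV. weight (\<lambda>i. UNIV \<times> {x i}) n y * coupled_kernel (a, x (Suc n)) y)
      = (\<Sum>s\<in>UNIV. \<Sum>t\<in>UNIV. (if t = x n then cond_coupling \<mu> m s t * path_prob m p n x else 0)
          * (p a s * signal_kernel a t (x (Suc n))))"
    by (simp add: sum_UNIV_prod Suc.IH coupled_kernel_def)
  also have "\<dots> = (\<Sum>s\<in>UNIV. cond_coupling \<mu> m s (x n) * path_prob m p n x
      * (p a s * signal_kernel a (x n) (x (Suc n))))"
    by (intro sum.cong refl) (simp add: if_distrib[of "\<lambda>u. u * _"] cong: if_cong)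
  also have "\<dots> = (\<Sum>s\<in>UNIV. p a s * cond_coupling \<mu> m s (x n))
      * signal_kernel a (x n) (x (Suc n)) * path_prob m p n x"
    by (simp add: sum_distrib_left sum_distrib_right mult_ac)
  also have "\<dots> = cond_coupling \<mu> m a (x (Suc n)) * path_prob m p (Suc n) x"
    using next_state_given_signal_mult_signal_kernel[of a "x n" "x (Suc n)"]
    by (simp add: next_state_given_signal_def[symmetric] path_prob_Suc mult_ac)
  finally show ?case
    by simp
qed

lemma state_marginal_weight_Suc:
  assumes "A (Suc n) = {c} \<times> UNIV"
  shows "(\<Sum>b\<in>UNIV. weight A (Suc n) (a, b)) =
     (if a = c then (\<Sum>s\<in>UNIV. (\<Sum>t\<in>UNIV. weight A n (s, t)) * p a s) else 0)"
proof -
  have "(\<Sum>b\<in>UNIV. \<Sum>y\<in>UNIV. weight A n y * coupled_kernel (s', b) y)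
      = (\<Sum>y\<in>UNIV. weight A n y * (\<Sum>b\<in>UNIV. coupled_kernel (s', b) y))" for s'
    by (subst sum.swap) (simp add: sum_distrib_left)
  also have "\<dots> s' = (\<Sum>s\<in>UNIV. (\<Sum>t\<in>UNIV. weight A n (s, t)) * p s' s)" for s'
    by (simp add: coupled_kernel_state_marginal sum_UNIV_prod sum_distrib_right)
  finally show ?thesis
    using assms by simp
qed

lemma state_marginal_weight_state_path:
  "(\<Sum>b\<in>UNIV. weight (\<lambda>i. {x i} \<times> UNIV) n (a, b)) = (if a = x n then path_prob m p n x else 0)"
proof (induction n arbitrary: a)
  case 0
  then show ?case
    by (simp add: \<mu>_fst_marginal path_prob_def)
next
  case (Suc n)
  then show ?case
    by (simp add: state_marginal_weight_Suc[where c="x (Suc n)"] path_prob_Suc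
        if_distrib[of "\<lambda>u. u * _"] cong: if_cong del: path_weight.simps(2))
qed

text \<open>The states after time \<open>n\<close> evolve by \<open>p\<close> from the state at time \<open>n\<close> alone, whatever the
  constraints \<open>A\<close> impose up to time \<open>n\<close>.\<close>
lemma weight_state_future:
  assumes An: "A n \<subseteq> {a} \<times> UNIV" and future: "\<forall>j\<in>{Suc n..n+k}. A j = {y j} \<times> UNIV"
  shows "(\<Sum>z\<in>UNIV. weight A (n + k) z)
    = (\<Sum>z\<in>UNIV. weight A n z) * (\<Prod>i\<in>{n..<n+k}. p ((y(n := a)) (Suc i)) ((y(n := a)) i))"
proof -
  define C where "C = (\<Sum>z\<in>UNIV. weight A n z)"
  define G where "G j = (\<Prod>i\<in>{n..<n+j}. p ((y(n := a)) (Suc i)) ((y(n := a)) i))" for j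
  have "(\<Sum>b\<in>UNIV. weight A (n + j) (s, b)) = (if s = (y(n := a)) (n + j) then C * G j else 0)"
    if "j \<le> k" for j s
    using that
  proof (induction j arbitrary: s)
    case 0
    have "weight A n (s', b) = 0" if "s' \<noteq> a" for s' b
      using An that by (auto intro: path_weight_outside)
    then have "C = (\<Sum>s'\<in>UNIV. if s' = a then \<Sum>b\<in>UNIV. weight A n (s', b) else 0)"
      unfolding C_def sum_UNIV_prod by (intro sum.cong) auto
    then show ?case
      using \<open>\<And>s' b. s' \<noteq> a \<Longrightarrow> weight A n (s', b) = 0\<close> by (simp add: G_def)
  next
    case (Suc j)
    have "A (Suc (n + j)) = {y (n + Suc j)} \<times> UNIV"
      using future Suc.prems by auto
    then show ?case
      using Suc by (simp add: state_marginal_weight_Suc G_def prod.atLeastLessThan_Suc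
          if_distrib[of "\<lambda>u. _ * u"] mult_ac cong: if_cong del: path_weight.simps(2))
  qed
  then show ?thesis
    by (simp add: sum_UNIV_prod C_def G_def)
qed

end

lemma all_le_add_split:
  "(\<forall>i\<le>n+k. P i) \<longleftrightarrow> (\<forall>i<n. P i) \<and> P n \<and> (\<forall>i\<in>{Suc n..n+k}. P i)"
  by (auto simp: Suc_le_eq) (metis Suc_leI atLeastAtMost_iff linorder_neqE_nat)

locale coupled_chain =
  signal_coupling p m \<mu> + markov_path_space M \<mu> "signal_coupling.coupled_kernel p m \<mu>"
  for p :: "'a::finite \<Rightarrow> 'a \<Rightarrow> real" and m \<mu> and M :: "(nat \<Rightarrow> 'a \<times> 'a) measure"
begin

lemma measure_signal_path: "measure M {w\<in>space M. \<forall>i\<le>n. snd (w i) = x i} = path_prob m p n x"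
proof -
  have "{w\<in>space M. \<forall>i\<le>n. snd (w i) = x i} = {w\<in>space M. \<forall>i\<le>n. w i \<in> UNIV \<times> {x i}}"
    by (auto simp: mem_Times_iff)
  then show ?thesis
    by (simp add: measure_cylinder sum_UNIV_prod weight_signal_path sum_distrib_right[symmetric]
        cond_coupling_sum)
qed

lemma measure_state_path: "measure M {w\<in>space M. \<forall>i\<le>n. fst (w i) = x i} = path_prob m p n x"
proof -
  have "{w\<in>space M. \<forall>i\<le>n. fst (w i) = x i} = {w\<in>space M. \<forall>i\<le>n. w i \<in> {x i} \<times> UNIV}"
    by (auto simp: mem_Times_iff)
  then show ?thesis
    by (simp add: measure_cylinder sum_UNIV_prod state_marginal_weight_state_path)
qed

lemma markov_law_state: "markov_law M (\<lambda>i w. fst (w i)) m p"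
  unfolding markov_law_def using measure_state_path by (simp add: path_prob_def)

lemma measure_state_signal: "measure M {w\<in>space M. fst (w n) = a \<and> snd (w n) = b} = \<mu> (a, b)"
  using measure_path_constrained_end[of n "\<lambda>_. UNIV" "(a, b)"]
  by (simp add: weight_unconstrained prod_eq_iff)

lemma measure_state_signal_path:
  "measure M {w\<in>space M. fst (w n) = a \<and> (\<forall>i\<le>n. snd (w i) = x i)}
   = cond_coupling \<mu> m a (x n) * measure M {w\<in>space M. \<forall>i\<le>n. snd (w i) = x i}"
proof -
  have "{w\<in>space M. fst (w n) = a \<and> (\<forall>i\<le>n. snd (w i) = x i)}
      = {w\<in>space M. (\<forall>i\<le>n. w i \<in> UNIV \<times> {x i}) \<and> w n = (a, x n)}"
    by (auto simp: mem_Times_iff prod_eq_iff)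
  then show ?thesis
    using measure_path_constrained_end[of n "\<lambda>i. UNIV \<times> {x i}" "(a, x n)"]
    by (simp add: weight_signal_path measure_signal_path)
qed

lemma signal_path_indep_future_states:
  "measure M {w\<in>space M. fst (w n) = a \<and> (\<forall>i\<le>n. snd (w i) = x i) \<and> (\<forall>i\<in>{Suc n..n+k}. fst (w i) = y i)}
     * measure M {w\<in>space M. fst (w n) = a}
   = measure M {w\<in>space M. fst (w n) = a \<and> (\<forall>i\<le>n. snd (w i) = x i)}
     * measure M {w\<in>space M. fst (w n) = a \<and> (\<forall>i\<in>{Suc n..n+k}. fst (w i) = y i)}"
proof -
  define A1 :: "nat \<Rightarrow> ('a \<times> 'a) set"
    where "A1 i = (if i < n then UNIV \<times> {x i} else if i = n then {(a, x n)} else {y i} \<times> UNIV)" for i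
  define A3 :: "nat \<Rightarrow> ('a \<times> 'a) set"
    where "A3 i = (if i < n then UNIV else if i = n then {a} \<times> UNIV else {y i} \<times> UNIV)" for i
  define G where "G = (\<Prod>i\<in>{n..<n+k}. p ((y(n := a)) (Suc i)) ((y(n := a)) i))"
  have E1: "{w\<in>space M. fst (w n) = a \<and> (\<forall>i\<le>n. snd (w i) = x i) \<and> (\<forall>i\<in>{Suc n..n+j}. fst (w i) = y i)}
      = {w\<in>space M. \<forall>i\<le>n+j. w i \<in> A1 i}" for j
    unfolding all_le_add_split by (auto simp: A1_def mem_Times_iff prod_eq_iff le_less)
  have E3: "{w\<in>space M. fst (w n) = a \<and> (\<forall>i\<in>{Suc n..n+j}. fst (w i) = y i)}
      = {w\<in>space M. \<forall>i\<le>n+j. w i \<in> A3 i}" for j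
    unfolding all_le_add_split by (auto simp: A3_def mem_Times_iff)
  have "(\<Sum>z\<in>UNIV. weight A1 (n + k) z) = (\<Sum>z\<in>UNIV. weight A1 n z) * G"
    unfolding G_def by (rule weight_state_future) (auto simp: A1_def)
  moreover have "(\<Sum>z\<in>UNIV. weight A3 (n + k) z) = (\<Sum>z\<in>UNIV. weight A3 n z) * G"
    unfolding G_def by (rule weight_state_future) (auto simp: A3_def)
  ultimately show ?thesis
    using E1[of k] E1[of 0] E3[of k] E3[of 0] by (simp add: measure_cylinder)
qed

end

theorem lemma4:
  fixes m :: "'a::finite \<Rightarrow> real" and p :: "'a \<Rightarrow> 'a \<Rightarrow> real" and \<mu> :: "'a \<times> 'a \<Rightarrow> real"
  assumes "stochastic p" and "irreducible_chain p" and "aperiodic_chain p"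
    and "invariant_measure m p" and "\<forall>s. m s > 0"
    and "assumption_A p"
    and "\<mu> \<in> couplings m"
  shows "\<exists>(M :: (nat \<Rightarrow> 'a \<times> 'a) measure) (s :: nat \<Rightarrow> (nat \<Rightarrow> 'a \<times> 'a) \<Rightarrow> 'a) t.
    prob_space M \<and>
    (\<forall>n. s n \<in> measurable M (count_space UNIV)) \<and>
    (\<forall>n. t n \<in> measurable M (count_space UNIV)) \<and>
    markov_law M s m p \<and>
    \<comment> \<open>(P1)\<close>
    (\<forall>n k a x y.
       measure M {w \<in> space M. s n w = a \<and> (\<forall>i\<le>n. t i w = x i) \<and> (\<forall>i\<in>{Suc n..n+k}. s i w = y i)}
         * measure M {w \<in> space M. s n w = a}
       = measure M {w \<in> space M. s n w = a \<and> (\<forall>i\<le>n. t i w = x i)}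
         * measure M {w \<in> space M. s n w = a \<and> (\<forall>i\<in>{Suc n..n+k}. s i w = y i)}) \<and>
    \<comment> \<open>(P2)\<close>
    (\<forall>n x. measure M {w \<in> space M. \<forall>i\<le>n. t i w = x i}
         = measure M {w \<in> space M. \<forall>i\<le>n. s i w = x i}) \<and>
    \<comment> \<open>(P3)\<close>
    (\<forall>n a b. measure M {w \<in> space M. s n w = a \<and> t n w = b} = \<mu> (a, b)) \<and>
    \<comment> \<open>(P4)\<close>
    (\<forall>n a x. measure M {w \<in> space M. s n w = a \<and> (\<forall>i\<le>n. t i w = x i)}
         = cond_coupling \<mu> m a (x n) * measure M {w \<in> space M. \<forall>i\<le>n. t i w = x i})"
proof -
  interpret signal_coupling p m \<mu>
    using assms(1,4-7) by unfold_locales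
  obtain M :: "(nat \<Rightarrow> 'a \<times> 'a) measure" where "prob_space M"
    and "sets M = sets (PiM UNIV (\<lambda>_. count_space UNIV))"
    and "markov_law M (\<lambda>i w. w i) \<mu> coupled_kernel"
    using markov_chain_measure_exists[OF _ \<mu>_sum stochastic_coupled_kernel] \<mu>_nonneg by blast
  then interpret coupled_chain p m \<mu> M
    using signal_coupling_axioms
    by (simp add: coupled_chain_def markov_path_space_def markov_path_space_axioms_def)
  have projections_measurable: "(\<lambda>w. fst (w n)) \<in> measurable M (count_space UNIV)"
    "(\<lambda>w. snd (w n)) \<in> measurable M (count_space UNIV)" for n
    by (rule measurable_compose[OF coordinate_measurable], simp)+
  show ?thesis
  proof (rule exI[of _ M], rule exI[of _ "\<lambda>n w. fst (w n)"], rule exI[of _ "\<lambda>n w. snd (w n)"])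
  qed (use prob_space_axioms projections_measurable markov_law_state signal_path_indep_future_states
      measure_signal_path measure_state_path measure_state_signal measure_state_signal_path in simp)
qed

end
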